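(* Let $n\geq 3$ and let $l_1,\dots,l_m$ be positive integers. Let $C=C_n(l_1,\dots,l_m)$ be any graph obtained from the cycle $C_n$ by attaching $m$ pendent paths of lengths $l_1,\dots,l_m$ at vertices of $C_n$, and let $SC=SC_n(l_1,\dots,l_m)$ be the graph obtained by attaching all $m$ of these pendent paths at a single vertex $c$ of $C_n$. Then for every integer $k\geq 0$, $$n_k(C)\leq n_k(SC),$$ and for every vertex $v$ on the cycle of $C$, $$n_k(v,C)\leq n_k(c,SC).$$
   Context: A pendent path of length $\ell$ attached at a vertex $w$ consists of $\ell$ new vertices $x_1,\dots,x_\ell$ and edges $wx_1,x_1x_2,\dots,x_{\ell-1}x_\ell$; several pendent paths may be attached at the same vertex. A subtree of a graph $G$ is a subgraph that is a tree (distinguished as subgraphs). $n_k(G)$ is the number of subtrees of $G$ with exactly $k$ vertices (with $n_0(G)=1$), and $n_k(v,G)$ is the number of those containing the vertex $v$. *)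

theory Defs
  imports Main
begin

text \<open>Simple graphs: a vertex set V and a set E of edges, each edge a 2-element set of vertices.\<close>

definition adj :: "'a set set \<Rightarrow> ('a \<times> 'a) set" where
  "adj F = {(x, y). {x, y} \<in> F}"

definition connected_sg :: "'a set \<Rightarrow> 'a set set \<Rightarrow> bool" where
  "connected_sg T F \<longleftrightarrow> (\<forall>x\<in>T. \<forall>y\<in>T. (x, y) \<in> (adj F)\<^sup>*)"

definition has_cycle :: "'a set \<Rightarrow> 'a set set \<Rightarrow> bool" where
  "has_cycle T F \<longleftrightarrow> (\<exists>vs. length vs \<ge> 3 \<and> distinct vs \<and> set vs \<subseteq> T \<and>
      (\<forall>i. Suc i < length vs \<longrightarrow> {vs ! i, vs ! Suc i} \<in> F) \<and> {last vs, hd vs} \<in> F)"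

definition is_subtree :: "'a set \<Rightarrow> 'a set set \<Rightarrow> 'a set \<Rightarrow> 'a set set \<Rightarrow> bool" where
  "is_subtree V E T F \<longleftrightarrow> T \<subseteq> V \<and> F \<subseteq> E \<and> (\<forall>e\<in>F. e \<subseteq> T) \<and> T \<noteq> {} \<and> finite T \<and>
     connected_sg T F \<and> \<not> has_cycle T F"

definition nk :: "'a set \<Rightarrow> 'a set set \<Rightarrow> nat \<Rightarrow> nat" where
  "nk V E k = (if k = 0 then 1 else card {(T, F). is_subtree V E T F \<and> card T = k})"

definition nkv :: "'a set \<Rightarrow> 'a set set \<Rightarrow> 'a \<Rightarrow> nat \<Rightarrow> nat" where
  "nkv V E v k = card {(T, F). is_subtree V E T F \<and> card T = k \<and> v \<in> T}"

text \<open>Vertex (0, i), i < n, is the i-th cycle vertex;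
  vertex (Suc j, t), 1 \<le> t \<le> ls!j, is the t-th vertex of the j-th pendent path,
  which is attached at cycle vertex (0, att j).\<close>
definition cp_verts :: "nat \<Rightarrow> nat list \<Rightarrow> (nat \<times> nat) set" where
  "cp_verts n ls = {(0, i) | i. i < n} \<union>
     {(Suc j, t) | j t. j < length ls \<and> 1 \<le> t \<and> t \<le> ls ! j}"

definition cp_edges :: "nat \<Rightarrow> nat list \<Rightarrow> (nat \<Rightarrow> nat) \<Rightarrow> (nat \<times> nat) set set" where
  "cp_edges n ls att =
     {{(0, i), (0, (i + 1) mod n)} | i. i < n} \<union>
     {{(0, att j), (Suc j, 1)} | j. j < length ls} \<union>
     {{(Suc j, t), (Suc j, Suc t)} | j t. j < length ls \<and> 1 \<le> t \<and> t < ls ! j}"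

end

theory Submission imports Defs begin

text \<open>Map every subtree of C injectively to a subtree of SC with the same number of vertices
  (c is the cycle vertex (0, 0)). If the subtree enters some pendent path, rotate the cycle so that
  the attachment vertex r of the lowest-indexed path it enters becomes c, and move every attachment
  edge it uses to c; the result is again a tree (cycles cannot run into pendent paths, and every
  vertex still reaches c). Since r can be read off the image, the map is injective. Subtrees
  entering no path are left alone for n_k, and for n_k(v, -) rotated so that v becomes c.\<close>

lemma rtrancl_exit_edge:
  assumes "(x, y) \<in> R\<^sup>*" "x \<in> U" "y \<notin> U"
  shows "\<exists>a b. (a, b) \<in> R \<and> a \<in> U \<and> b \<notin> U"
  using assms by (induction rule: rtrancl_induct) blast+

lemma rtrancl_map:
  assumes "(x, y) \<in> R\<^sup>*" "\<And>a b. (a, b) \<in> R \<Longrightarrow> (f a, f b) \<in> S\<^sup>*"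
  shows "(f x, f y) \<in> S\<^sup>*"
  using assms(1) by (induction rule: rtrancl_induct) (auto intro: rtrancl_trans dest: assms(2))

lemma adj_iff: "(x, y) \<in> adj F \<longleftrightarrow> {x, y} \<in> F"
  by (simp add: adj_def)

lemma adj_rtrancl_sym: "(x, y) \<in> (adj F)\<^sup>* \<Longrightarrow> (y, x) \<in> (adj F)\<^sup>*"
proof -
  have "sym (adj F)" by (auto simp: sym_def adj_def insert_commute)
  then show "(x, y) \<in> (adj F)\<^sup>* \<Longrightarrow> (y, x) \<in> (adj F)\<^sup>*" by (meson sym_rtrancl symD)
qed

lemma connected_sgI_hub:
  assumes "\<And>x. x \<in> T \<Longrightarrow> (x, z) \<in> (adj F)\<^sup>*"
  shows "connected_sg T F"
  unfolding connected_sg_def using assms adj_rtrancl_sym rtrancl_trans by metis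

lemma cycle_vertex_two_neighbours:
  assumes "length vs \<ge> 3" "distinct vs" "\<forall>i. Suc i < length vs \<longrightarrow> {vs ! i, vs ! Suc i} \<in> F"
    "{last vs, hd vs} \<in> F" "x \<in> set vs"
  shows "\<exists>y z. y \<noteq> z \<and> y \<in> set vs \<and> z \<in> set vs \<and> {x, y} \<in> F \<and> {x, z} \<in> F"
proof -
  define L where "L = length vs"
  obtain i where i: "i < L" "x = vs ! i" using assms(5) unfolding L_def in_set_conv_nth by blast
  have "vs \<noteq> []" using assms(1) by auto
  then have hd: "hd vs = vs ! 0" and last: "last vs = vs ! (L - 1)"
    by (simp_all add: hd_conv_nth last_conv_nth L_def)
  define s where "s = (if Suc i < L then Suc i else 0)"
  define p where "p = (if i = 0 then L - 1 else i - 1)"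
  have sp: "s < L" "p < L" "s \<noteq> p" using i assms(1) unfolding s_def p_def L_def by auto
  have succ: "{x, vs ! s} \<in> F"
  proof (cases "Suc i < L")
    case True then show ?thesis using assms(3) i unfolding s_def L_def by simp
  next
    case False
    then have "i = L - 1" using i by simp
    then show ?thesis using assms(4) i False hd last unfolding s_def by simp
  qed
  have pred: "{x, vs ! p} \<in> F"
  proof (cases "i = 0")
    case True then show ?thesis using assms(4) i hd last unfolding p_def by (simp add: insert_commute)
  next
    case False
    then have "Suc (i - 1) < L" "Suc (i - 1) = i" using i by simp_all
    moreover from this have "{vs ! (i - 1), vs ! Suc (i - 1)} \<in> F" using assms(3) unfolding L_def by blast
    ultimately show ?thesis using i False unfolding p_def by (simp add: insert_commute)
  qed
  have "vs ! s \<noteq> vs ! p" using sp assms(2) by (simp add: nth_eq_iff_index_eq L_def)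
  moreover have "vs ! s \<in> set vs" "vs ! p \<in> set vs" using sp by (simp_all add: L_def)
  ultimately show ?thesis using succ pred by blast
qed

lemma cp_edge_cases:
  assumes "e \<in> cp_edges n ls a"
  obtains (cycle) i where "i < n" "e = {(0, i), (0, (i + 1) mod n)}"
    | (attach) j where "j < length ls" "e = {(0, a j), (Suc j, 1)}"
    | (path) j t where "j < length ls" "1 \<le> t" "t < ls ! j" "e = {(Suc j, t), (Suc j, Suc t)}"
  using assms unfolding cp_edges_def by blast

lemma cp_edges_cycleI: "i < n \<Longrightarrow> {(0, i), (0, (i + 1) mod n)} \<in> cp_edges n ls a"
  unfolding cp_edges_def by blast

lemma cp_edges_attachI: "j < length ls \<Longrightarrow> {(0, a j), (Suc j, 1)} \<in> cp_edges n ls a"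
  unfolding cp_edges_def by blast

lemma cp_edges_pathI:
  "j < length ls \<Longrightarrow> 1 \<le> t \<Longrightarrow> t < ls ! j \<Longrightarrow> {(Suc j, t), (Suc j, Suc t)} \<in> cp_edges n ls a"
  unfolding cp_edges_def by blast

lemma cp_verts_iff: "(p, q) \<in> cp_verts n ls \<longleftrightarrow> (p = 0 \<and> q < n) \<or>
    (p \<noteq> 0 \<and> p - 1 < length ls \<and> 1 \<le> q \<and> q \<le> ls ! (p - 1))"
  unfolding cp_verts_def by (cases p) auto

lemma path_vertex_neighbour:
  assumes "{(Suc j, t), y} \<in> cp_edges n ls (\<lambda>_. 0)"
  shows "y = (Suc j, Suc t) \<or> y = (if t = 1 then (0, 0) else (Suc j, t - 1))"
  using assms by (cases rule: cp_edge_cases) (auto simp: doubleton_eq_iff)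

definition rotate_cycle :: "nat \<Rightarrow> nat \<Rightarrow> nat \<times> nat \<Rightarrow> nat \<times> nat" where
  "rotate_cycle n r x = (if fst x = 0 then (0, (snd x + (n - r)) mod n) else x)"

lemma fst_rotate_cycle [simp]: "fst (rotate_cycle n r x) = fst x"
  by (simp add: rotate_cycle_def)

lemma rotate_cycle_path [simp]: "rotate_cycle n r (Suc j, t) = (Suc j, t)"
  by (simp add: rotate_cycle_def)

lemma rotate_cycle_cycle: "rotate_cycle n r (0, i) = (0, (i + (n - r)) mod n)"
  by (simp add: rotate_cycle_def)

lemma rotate_cycle_root [simp]: "r < n \<Longrightarrow> rotate_cycle n r (0, r) = (0, 0)"
  by (simp add: rotate_cycle_def)

lemma rotate_cycle_0_image:
  assumes "A \<subseteq> cp_verts n ls"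
  shows "rotate_cycle n 0 ` A = A"
proof -
  have "rotate_cycle n 0 x = x" if "x \<in> A" for x
    using that assms by (cases x) (auto simp: rotate_cycle_def cp_verts_iff)
  then have "rotate_cycle n 0 ` A = (\<lambda>x. x) ` A" by (rule image_cong[OF refl])
  then show ?thesis by simp
qed

lemma rotate_cycle_index_inj:
  fixes i i' n r :: nat
  assumes "i < n" "i' < n" "r \<le> n" "(i + (n - r)) mod n = (i' + (n - r)) mod n"
  shows "i = i'"
proof -
  have undo: "((j + (n - r)) mod n + r) mod n = j" if "j < n" for j
  proof -
    have "((j + (n - r)) mod n + r) mod n = (j + (n - r) + r) mod n" by (rule mod_add_left_eq)
    also have "j + (n - r) + r = j + n" using assms(3) by simp
    finally show ?thesis using that by simp
  qed
  show ?thesis using undo[OF assms(1)] undo[OF assms(2)] assms(4) by metis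
qed

lemma mod_Suc_add_mod: "(Suc i mod n + k) mod n = Suc ((i + k) mod n) mod (n::nat)"
  by (metis add_Suc mod_Suc_eq mod_add_left_eq)

definition cycle_path_edge :: "(nat \<times> nat) set \<Rightarrow> bool" where
  "cycle_path_edge e \<longleftrightarrow> (\<exists>x\<in>e. fst x = 0) \<and> (\<exists>x\<in>e. fst x \<noteq> 0)"

definition reattach :: "nat \<Rightarrow> nat \<Rightarrow> (nat \<times> nat) set \<Rightarrow> (nat \<times> nat) set" where
  "reattach n r e = (if cycle_path_edge e then insert (0, 0) {x\<in>e. fst x \<noteq> 0} else rotate_cycle n r ` e)"

lemma cycle_path_edge_iff: "e \<in> cp_edges n ls a \<Longrightarrow> cycle_path_edge e \<longleftrightarrow> (\<exists>j<length ls. e = {(0, a j), (Suc j, 1)})"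
  by (cases rule: cp_edge_cases) (auto simp: cycle_path_edge_def)

lemma cycle_path_edge_reattach [simp]: "cycle_path_edge (reattach n r e) = cycle_path_edge e"
  unfolding reattach_def cycle_path_edge_def by force

lemma reattach_rotate: "\<not> cycle_path_edge e \<Longrightarrow> reattach n r e = rotate_cycle n r ` e"
  by (simp add: reattach_def)

lemma reattach_attach [simp]: "fst x \<noteq> 0 \<Longrightarrow> reattach n r {(0, b), x} = {(0, 0), x}"
  unfolding reattach_def cycle_path_edge_def by auto

lemma path_vertex_in_reattach: "fst x \<noteq> 0 \<Longrightarrow> x \<in> reattach n r e \<longleftrightarrow> x \<in> e"
  unfolding reattach_def rotate_cycle_def by (auto simp: image_iff)

lemma cycle_in_ES_on_main_cycle:
  assumes "F \<subseteq> cp_edges n ls (\<lambda>_. 0)" "length vs \<ge> 3" "distinct vs"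
    "\<forall>i. Suc i < length vs \<longrightarrow> {vs ! i, vs ! Suc i} \<in> F" "{last vs, hd vs} \<in> F" "x \<in> set vs"
  shows "fst x = 0"
proof (rule ccontr)
  assume "fst x \<noteq> 0"
  then obtain j t0 where x: "x = (Suc j, t0)" by (cases x; cases "fst x") auto
  define S where "S = {t. (Suc j, t) \<in> set vs}"
  have fin: "finite S"
    by (rule finite_subset[of _ "snd ` set vs"]) (force simp: S_def)+
  moreover have "S \<noteq> {}" using assms(6) x by (auto simp: S_def)
  ultimately have "Max S \<in> S" by (rule Max_in)
  then have top: "(Suc j, Max S) \<in> set vs" by (simp add: S_def)
  have above_top: "Suc (Max S) \<notin> S" using Max_ge[OF fin, of "Suc (Max S)"] by auto
  obtain y z where yz: "y \<noteq> z" "y \<in> set vs" "z \<in> set vs"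
      "{(Suc j, Max S), y} \<in> F" "{(Suc j, Max S), z} \<in> F"
    using cycle_vertex_two_neighbours[OF assms(2-5) top] by blast
  \<comment> \<open>the highest vertex of path j on the cycle has only its lower neighbour left\<close>
  let ?below = "if Max S = 1 then (0, 0) else (Suc j, Max S - 1)"
  have "y = ?below" "z = ?below"
    using yz above_top path_vertex_neighbour assms(1) unfolding S_def by blast+
  then show False using yz(1) by simp
qed

locale cycle_with_paths =
  fixes n :: nat and ls :: "nat list" and att :: "nat \<Rightarrow> nat"
  assumes n_ge_3: "n \<ge> 3" and paths_pos: "\<forall>l\<in>set ls. l > 0"
    and att_lt: "\<forall>j<length ls. att j < n"
begin

abbreviation "V \<equiv> cp_verts n ls"
abbreviation "EC \<equiv> cp_edges n ls att"
abbreviation "ES \<equiv> cp_edges n ls (\<lambda>_. 0)"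

lemma cp_edge_subset_verts:
  assumes "e \<in> cp_edges n ls a" "\<forall>j<length ls. a j < n"
  shows "e \<subseteq> V"
  using assms(1)
proof (cases rule: cp_edge_cases)
  case (attach j)
  then have "ls ! j \<ge> 1" using paths_pos by (simp add: Suc_le_eq)
  then show ?thesis using attach assms(2) by (simp add: cp_verts_iff)
qed (use n_ge_3 in \<open>simp_all add: cp_verts_iff\<close>)

lemma EC_subset_verts: "e \<in> EC \<Longrightarrow> e \<subseteq> V"
  using cp_edge_subset_verts att_lt by blast

lemma finite_verts: "finite V"
proof -
  have "V \<subseteq> {..length ls} \<times> {..n + sum_list ls}"
  proof
    fix x assume "x \<in> V"
    moreover obtain p q where "x = (p, q)" by (cases x)
    moreover have "p \<noteq> 0 \<Longrightarrow> p - 1 < length ls \<Longrightarrow> ls ! (p - 1) \<le> sum_list ls"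
      by (rule elem_le_sum_list)
    ultimately show "x \<in> {..length ls} \<times> {..n + sum_list ls}"
      by (auto simp: cp_verts_iff)
  qed
  then show ?thesis using finite_subset by blast
qed

lemma finite_subtrees_ES: "finite {(T, F). is_subtree V ES T F \<and> P T}"
proof -
  have "ES \<subseteq> Pow V" using cp_edge_subset_verts[of _ "\<lambda>_. 0"] n_ge_3 by auto
  then have "finite ES" using finite_verts by (meson finite_Pow_iff finite_subset)
  moreover have "{(T, F). is_subtree V ES T F \<and> P T} \<subseteq> Pow V \<times> Pow ES"
    unfolding is_subtree_def by auto
  ultimately show ?thesis using finite_verts by (meson finite_Pow_iff finite_SigmaI finite_subset)
qed

lemma rotate_cycle_in_verts: "x \<in> V \<Longrightarrow> rotate_cycle n r x \<in> V"
  using n_ge_3 by (cases x) (auto simp: rotate_cycle_def cp_verts_iff)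

lemma inj_on_rotate_cycle:
  assumes "r < n"
  shows "inj_on (rotate_cycle n r) V"
proof (rule inj_onI)
  fix x y assume x: "x \<in> V" and y: "y \<in> V" and eq: "rotate_cycle n r x = rotate_cycle n r y"
  obtain p q where x_pq: "x = (p, q)" by fastforce
  obtain p' q' where y_pq: "y = (p', q')" by fastforce
  have "p = p'" using arg_cong[OF eq, of fst] x_pq y_pq by simp
  show "x = y"
  proof (cases "p = 0")
    case True
    then have cyc: "x = (0, q)" "y = (0, q')" using x_pq y_pq \<open>p = p'\<close> by simp_all
    then have "q < n" "q' < n" using x y by (simp_all add: cp_verts_iff)
    moreover have "r \<le> n" using assms by simp
    moreover have "(q + (n - r)) mod n = (q' + (n - r)) mod n"
      using eq unfolding cyc rotate_cycle_cycle by simp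
    ultimately have "q = q'" by (rule rotate_cycle_index_inj)
    then show ?thesis using cyc by simp
  next
    case False
    then show ?thesis using eq x_pq y_pq \<open>p = p'\<close> by (simp add: rotate_cycle_def)
  qed
qed

lemma reattach_in_ES:
  assumes "e \<in> EC"
  shows "reattach n r e \<in> ES"
  using assms
proof (cases rule: cp_edge_cases)
  case (cycle i)
  define k where "k = (i + (n - r)) mod n"
  have "\<not> cycle_path_edge e" using cycle by (auto simp: cycle_path_edge_def)
  then have "reattach n r e = {(0, k), (0, (k + 1) mod n)}"
    using cycle by (simp add: k_def reattach_rotate rotate_cycle_cycle mod_Suc_add_mod)
  moreover have "k < n" using n_ge_3 by (simp add: k_def)
  ultimately show ?thesis using cp_edges_cycleI[where a = "\<lambda>_. 0"] by simp
next
  case (attach j)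
  then show ?thesis
    using cp_edges_attachI[where a = "\<lambda>_. 0"] by simp
next
  case (path j t)
  then have "\<not> cycle_path_edge e" by (auto simp: cycle_path_edge_def)
  then have "reattach n r e = e" using path by (simp add: reattach_rotate)
  then show ?thesis using path by (simp add: cp_edges_pathI)
qed

lemma inj_on_reattach:
  assumes "r < n"
  shows "inj_on (reattach n r) EC"
proof (rule inj_onI)
  fix e1 e2 assume e1: "e1 \<in> EC" and e2: "e2 \<in> EC" and eq: "reattach n r e1 = reattach n r e2"
  have same: "cycle_path_edge e1 = cycle_path_edge e2"
    using arg_cong[OF eq, of cycle_path_edge] by simp
  show "e1 = e2"
  proof (cases "cycle_path_edge e1")
    case True
    obtain j1 j2 where j: "e1 = {(0, att j1), (Suc j1, 1)}" "e2 = {(0, att j2), (Suc j2, 1)}"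
      using True same cycle_path_edge_iff[OF e1] cycle_path_edge_iff[OF e2] by auto
    have "{(0, 0), (Suc j1, 1)} = {(0::nat, 0::nat), (Suc j2, 1)}"
      using eq unfolding j by simp
    then have "j1 = j2" by (auto simp: doubleton_eq_iff)
    then show ?thesis using j by simp
  next
    case False
    then have "rotate_cycle n r ` e1 = rotate_cycle n r ` e2" using eq same by (simp add: reattach_rotate)
    then show ?thesis
      using inj_on_image_eq_iff[OF inj_on_rotate_cycle[OF assms]] EC_subset_verts e1 e2 by blast
  qed
qed

lemma reattach_subset_image:
  assumes "F \<subseteq> EC" "\<forall>e\<in>F. e \<subseteq> T" "r < n" "(0, r) \<in> T" "e \<in> F"
  shows "reattach n r e \<subseteq> rotate_cycle n r ` T"
proof (cases "cycle_path_edge e")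
  case True
  have "e \<in> EC" using assms(1,5) by blast
  then obtain j where j: "e = {(0, att j), (Suc j, 1)}" using True cycle_path_edge_iff by blast
  have "(0, 0) \<in> rotate_cycle n r ` T" using rotate_cycle_root[OF assms(3)] assms(4) by force
  moreover have "(Suc j, 1) \<in> rotate_cycle n r ` T"
    using rotate_cycle_path[of n r j 1] assms(2,5) j by (metis image_eqI insert_subset)
  ultimately show ?thesis using j by simp
next
  case False
  then show ?thesis using assms(2,5) by (simp add: reattach_rotate image_mono)
qed

lemma cycle_vertex_reaches_root:
  assumes "F \<subseteq> EC" "connected_sg T F" "r < n" "(0, r) \<in> T" "x \<in> T" "fst x = 0"
  shows "(rotate_cycle n r x, (0, 0)) \<in> (adj (reattach n r ` F))\<^sup>*"
proof -
  let ?rot = "rotate_cycle n r" and ?F' = "reattach n r ` F"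
  \<comment> \<open>after collapsing every pendent path onto its attachment vertex,
    each edge of F becomes an edge of the reattached forest or a loop\<close>
  define collapse where "collapse y = (if fst y = 0 then y else (0, att (fst y - 1)))"
    for y :: "nat \<times> nat"
  have step: "(?rot (collapse a), ?rot (collapse b)) \<in> (adj ?F')\<^sup>*" if "(a, b) \<in> adj F" for a b
  proof -
    have ab: "{a, b} \<in> F" using that by (simp add: adj_iff)
    then have "{a, b} \<in> EC" using assms(1) by blast
    then show ?thesis
    proof (cases rule: cp_edge_cases)
      case (cycle i)
      then have "fst a = 0" "fst b = 0" by (auto simp: doubleton_eq_iff)
      then have "reattach n r {a, b} = {?rot a, ?rot b}" by (simp add: reattach_def cycle_path_edge_def)
      then have "(?rot a, ?rot b) \<in> adj ?F'" using ab by (metis adj_iff image_eqI)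
      then show ?thesis using \<open>fst a = 0\<close> \<open>fst b = 0\<close> by (simp add: collapse_def)
    next
      case (attach j)
      then have "collapse a = (0, att j)" "collapse b = (0, att j)"
        by (auto simp: collapse_def doubleton_eq_iff)
      then show ?thesis by simp
    next
      case (path j t)
      then have "collapse a = (0, att j)" "collapse b = (0, att j)"
        by (auto simp: collapse_def doubleton_eq_iff)
      then show ?thesis by simp
    qed
  qed
  have "(x, (0, r)) \<in> (adj F)\<^sup>*" using assms(2,4,5) unfolding connected_sg_def by blast
  from rtrancl_map[where f = "\<lambda>y. ?rot (collapse y)", OF this step] show ?thesis
    using assms(3,6) by (simp add: collapse_def)
qed

lemma path_vertex_reaches_root:
  assumes st: "is_subtree V EC T F" and r: "r < n" "(0, r) \<in> T"
  shows "(Suc j, t) \<in> T \<Longrightarrow> ((Suc j, t), (0, 0)) \<in> (adj (reattach n r ` F))\<^sup>*"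
proof (induction t rule: less_induct)
  case (less t)
  let ?F' = "reattach n r ` F"
  from st have FE: "F \<subseteq> EC" and eT: "\<forall>e\<in>F. e \<subseteq> T" and con: "connected_sg T F"
    and "t \<ge> 1" using less.prems by (auto simp: is_subtree_def cp_verts_iff)
  \<comment> \<open>a walk to the cycle must leave the part of path j at height t or more\<close>
  define U where "U = {y. fst y = Suc j \<and> snd y \<ge> t}"
  have "((Suc j, t), (0, r)) \<in> (adj F)\<^sup>*" using con less.prems r(2) unfolding connected_sg_def by blast
  from rtrancl_exit_edge[OF this, of U] obtain a b where ab: "{a, b} \<in> F" "a \<in> U" "b \<notin> U"
    unfolding U_def by (auto simp: adj_iff)
  then have "{a, b} \<in> EC" using FE by blast
  then show ?case
  proof (cases rule: cp_edge_cases)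
    case (cycle i)
    then show ?thesis using ab(2) by (auto simp: U_def doubleton_eq_iff)
  next
    case (attach j')
    then have "a = (Suc j', 1)" "b = (0, att j')" using ab(2) by (auto simp: U_def doubleton_eq_iff)
    then have "j' = j" "t = 1" using ab(2) \<open>t \<ge> 1\<close> by (auto simp: U_def)
    have "reattach n r {a, b} = {(Suc j, 1), (0, 0)}"
      using \<open>a = _\<close> \<open>b = _\<close> \<open>j' = j\<close> by (simp add: insert_commute)
    then have "((Suc j, t), (0, 0)) \<in> adj ?F'" using ab(1) \<open>t = 1\<close> by (metis adj_iff image_eqI)
    then show ?thesis by blast
  next
    case (path j' t')
    then have a: "a = (Suc j, Suc t')" and b: "b = (Suc j, t')" and t: "t = Suc t'"
      using ab(2,3) by (auto simp: U_def doubleton_eq_iff)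
    have "\<not> cycle_path_edge {a, b}" using a b by (simp add: cycle_path_edge_def)
    then have "reattach n r {a, b} = {a, b}" using a b by (simp add: reattach_rotate)
    then have "((Suc j, t), b) \<in> adj ?F'" using ab(1) a t by (metis adj_iff image_eqI)
    moreover have "(b, (0, 0)) \<in> (adj ?F')\<^sup>*" using less.IH[of t'] ab(1) eT b t by blast
    ultimately show ?thesis by (meson converse_rtrancl_into_rtrancl)
  qed
qed

lemma connected_rotate_reattach:
  assumes "is_subtree V EC T F" "r < n" "(0, r) \<in> T"
  shows "connected_sg (rotate_cycle n r ` T) (reattach n r ` F)"
proof (rule connected_sgI_hub)
  fix x' assume "x' \<in> rotate_cycle n r ` T"
  then obtain x where x: "x \<in> T" "x' = rotate_cycle n r x" by blast
  show "(x', (0, 0)) \<in> (adj (reattach n r ` F))\<^sup>*"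
  proof (cases "fst x")
    case 0
    then show ?thesis
      using cycle_vertex_reaches_root assms x unfolding is_subtree_def by blast
  next
    case (Suc j)
    then obtain t where "x = (Suc j, t)" by (cases x) simp
    then show ?thesis using path_vertex_reaches_root[OF assms] x by simp
  qed
qed

lemma acyclic_rotate_reattach:
  assumes "is_subtree V EC T F" "r < n"
  shows "\<not> has_cycle (rotate_cycle n r ` T) (reattach n r ` F)"
proof
  let ?rot = "rotate_cycle n r" and ?F' = "reattach n r ` F"
  from assms(1) have TV: "T \<subseteq> V" and FE: "F \<subseteq> EC" and eT: "\<forall>e\<in>F. e \<subseteq> T"
    and acyclic: "\<not> has_cycle T F"
    unfolding is_subtree_def by auto
  have F'E: "?F' \<subseteq> ES" using reattach_in_ES FE by blast
  assume "has_cycle (?rot ` T) ?F'"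
  then obtain vs where vs: "length vs \<ge> 3" "distinct vs" "set vs \<subseteq> ?rot ` T"
    "\<forall>i. Suc i < length vs \<longrightarrow> {vs ! i, vs ! Suc i} \<in> ?F'" "{last vs, hd vs} \<in> ?F'"
    unfolding has_cycle_def by blast
  have on_cycle: "fst x = 0" if "x \<in> set vs" for x
    using cycle_in_ES_on_main_cycle[OF F'E vs(1,2,4,5) that] .
  define g where "g = inv_into T ?rot"
  have inj: "inj_on ?rot T" using inj_on_rotate_cycle[OF assms(2)] TV by (rule inj_on_subset)
  have preimage_edge: "{g u, g w} \<in> F" if uw: "{u, w} \<in> ?F'" "fst u = 0" "fst w = 0" for u w
  proof -
    obtain e where e: "e \<in> F" "reattach n r e = {u, w}" using uw(1) by blast
    have "\<not> cycle_path_edge {u, w}" using uw(2,3) by (auto simp: cycle_path_edge_def)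
    then have "\<not> cycle_path_edge e" using e(2) cycle_path_edge_reattach by metis
    then have "?rot ` e = {u, w}" using e(2) reattach_rotate by metis
    then have "g ` {u, w} = e" unfolding g_def using inv_into_image_cancel[OF inj] eT e(1) by metis
    then show ?thesis using e(1) by simp
  qed
  have "vs \<noteq> []" using vs(1) by auto
  have "length (map g vs) \<ge> 3" using vs(1) by simp
  moreover have "distinct (map g vs)"
    unfolding distinct_map using vs(2,3) inj_on_inv_into[of "set vs" ?rot T] by (simp add: g_def)
  moreover have "set (map g vs) \<subseteq> T" using vs(3) by (auto simp: g_def inv_into_into)
  moreover have "\<forall>i. Suc i < length (map g vs) \<longrightarrow> {map g vs ! i, map g vs ! Suc i} \<in> F"
  proof (intro allI impI)
    fix i assume "Suc i < length (map g vs)"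
    then have i: "Suc i < length vs" by simp
    then have "{vs ! i, vs ! Suc i} \<in> ?F'" "fst (vs ! i) = 0" "fst (vs ! Suc i) = 0"
      using vs(4) on_cycle by simp_all
    then show "{map g vs ! i, map g vs ! Suc i} \<in> F" using preimage_edge i by simp
  qed
  moreover have "{last (map g vs), hd (map g vs)} \<in> F"
  proof -
    have "fst (last vs) = 0" "fst (hd vs) = 0" using on_cycle \<open>vs \<noteq> []\<close> by simp_all
    then have "{g (last vs), g (hd vs)} \<in> F" by (rule preimage_edge[OF vs(5)])
    then show ?thesis using \<open>vs \<noteq> []\<close> by (simp add: last_map hd_map)
  qed
  ultimately have "has_cycle T F" unfolding has_cycle_def by blast
  then show False using acyclic by blast
qed

lemma subtree_rotate_reattach:
  assumes "is_subtree V EC T F" "r < n" "(0, r) \<in> T"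
  shows "is_subtree V ES (rotate_cycle n r ` T) (reattach n r ` F)"
proof -
  from assms(1) have TV: "T \<subseteq> V" and FE: "F \<subseteq> EC" and eT: "\<forall>e\<in>F. e \<subseteq> T"
    unfolding is_subtree_def by auto
  have "rotate_cycle n r ` T \<subseteq> V" using rotate_cycle_in_verts TV by blast
  moreover have "reattach n r ` F \<subseteq> ES" using reattach_in_ES FE by blast
  moreover have "\<forall>e\<in>reattach n r ` F. e \<subseteq> rotate_cycle n r ` T"
    using reattach_subset_image[OF FE eT assms(2,3)] by blast
  moreover have "rotate_cycle n r ` T \<noteq> {}" "finite (rotate_cycle n r ` T)"
    using assms(1) unfolding is_subtree_def by auto
  ultimately show ?thesis
    unfolding is_subtree_def
    using connected_rotate_reattach[OF assms] acyclic_rotate_reattach[OF assms(1,2)] by blast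
qed

lemma subtree_ES_if_no_cycle_path_edge:
  assumes "is_subtree V EC T F" "\<forall>e\<in>F. \<not> cycle_path_edge e"
  shows "is_subtree V ES T F"
proof -
  have "e \<in> ES" if "e \<in> F" for e
  proof -
    have "e \<in> EC" "\<not> cycle_path_edge e" using assms that unfolding is_subtree_def by auto
    from this(1) show ?thesis
    proof (cases rule: cp_edge_cases)
      case (cycle i)
      then show ?thesis using cp_edges_cycleI[where a = "\<lambda>_. 0"] by simp
    next
      case (attach j)
      then show ?thesis using \<open>\<not> cycle_path_edge e\<close> by (auto simp: cycle_path_edge_def)
    next
      case (path j t)
      then show ?thesis using cp_edges_pathI[where a = "\<lambda>_. 0"] by simp
    qed
  qed
  then show ?thesis using assms(1) unfolding is_subtree_def by blast
qed

definition root_vertex :: "nat \<Rightarrow> (nat \<times> nat) set set \<Rightarrow> nat" where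
  "root_vertex c F = (if \<exists>e\<in>F. cycle_path_edge e
     then att (LEAST j. \<exists>e\<in>F. cycle_path_edge e \<and> (Suc j, 1) \<in> e) else c)"

definition reroot ::
    "nat \<Rightarrow> (nat \<times> nat) set \<times> (nat \<times> nat) set set \<Rightarrow> (nat \<times> nat) set \<times> (nat \<times> nat) set set" where
  "reroot c = (\<lambda>(T, F). (rotate_cycle n (root_vertex c F) ` T, reattach n (root_vertex c F) ` F))"

lemma root_vertex_reattach: "root_vertex c (reattach n r ` F) = root_vertex c F"
proof -
  have "(\<exists>e\<in>reattach n r ` F. cycle_path_edge e \<and> (Suc j, 1) \<in> e) \<longleftrightarrow>
        (\<exists>e\<in>F. cycle_path_edge e \<and> (Suc j, 1) \<in> e)" for j
    using path_vertex_in_reattach[of "(Suc j, 1)"] by simp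
  then show ?thesis unfolding root_vertex_def by simp
qed

lemma root_vertex_attach_edge:
  assumes "F \<subseteq> EC" "\<exists>e\<in>F. cycle_path_edge e"
  obtains j where "j < length ls" "{(0, att j), (Suc j, 1)} \<in> F" "root_vertex c F = att j"
proof -
  define P where "P j \<longleftrightarrow> (\<exists>e\<in>F. cycle_path_edge e \<and> (Suc j, 1) \<in> e)" for j
  obtain e where e: "e \<in> F" "cycle_path_edge e" using assms(2) by blast
  then obtain j where "e = {(0, att j), (Suc j, 1)}" using assms(1) cycle_path_edge_iff by blast
  then have "P j" using e unfolding P_def by blast
  then have "P (LEAST j. P j)" by (rule LeastI)
  then obtain e0 where e0: "e0 \<in> F" "cycle_path_edge e0" "(Suc (LEAST j. P j), 1) \<in> e0"
    unfolding P_def by blast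
  then obtain j' where j': "j' < length ls" "e0 = {(0, att j'), (Suc j', 1)}"
    using assms(1) cycle_path_edge_iff by blast
  then have "j' = (LEAST j. P j)" using e0(3) by auto
  then have "root_vertex c F = att j'" using assms(2) unfolding root_vertex_def P_def by simp
  then show ?thesis using that j' e0(1) by blast
qed

lemma root_vertex_lt:
  assumes "F \<subseteq> EC" "c < n"
  shows "root_vertex c F < n"
proof (cases "\<exists>e\<in>F. cycle_path_edge e")
  case True
  then obtain j where "j < length ls" "root_vertex c F = att j"
    using root_vertex_attach_edge[OF assms(1)] by blast
  then show ?thesis using att_lt by simp
next
  case False
  then show ?thesis using assms(2) by (simp add: root_vertex_def)
qed

lemma root_vertex_in_tree:
  assumes "is_subtree V EC T F" "(\<exists>e\<in>F. cycle_path_edge e) \<or> (0, c) \<in> T"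
  shows "(0, root_vertex c F) \<in> T"
proof (cases "\<exists>e\<in>F. cycle_path_edge e")
  case True
  have "F \<subseteq> EC" "\<forall>e\<in>F. e \<subseteq> T" using assms(1) unfolding is_subtree_def by auto
  moreover obtain j where "{(0, att j), (Suc j, 1)} \<in> F" "root_vertex c F = att j"
    using root_vertex_attach_edge[OF \<open>F \<subseteq> EC\<close> True] by blast
  ultimately show ?thesis by auto
next
  case False
  then show ?thesis using assms(2) unfolding root_vertex_def by simp
qed

lemma subtree_reroot:
  assumes "is_subtree V EC T F" "c < n" "(0, c) \<in> T \<or> c = 0"
  shows "is_subtree V ES (rotate_cycle n (root_vertex c F) ` T) (reattach n (root_vertex c F) ` F)"
proof -
  have TV: "T \<subseteq> V" and FE: "F \<subseteq> EC" using assms(1) unfolding is_subtree_def by auto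
  consider (root_in_tree) "(0, root_vertex c F) \<in> T"
    | (enters_no_path) "\<forall>e\<in>F. \<not> cycle_path_edge e" "c = 0"
    using assms(3) root_vertex_in_tree[OF assms(1)] by blast
  then show ?thesis
  proof cases
    case root_in_tree
    then show ?thesis using subtree_rotate_reattach assms(1) root_vertex_lt[OF FE assms(2)] by blast
  next
    case enters_no_path
    then have "root_vertex c F = 0" unfolding root_vertex_def by simp
    moreover have "rotate_cycle n 0 ` T = T" using TV by (rule rotate_cycle_0_image)
    moreover have "reattach n 0 e = e" if "e \<in> F" for e
    proof -
      have "e \<subseteq> V" using that FE EC_subset_verts by blast
      then show ?thesis using that enters_no_path by (simp add: reattach_rotate rotate_cycle_0_image)
    qed
    ultimately show ?thesis using subtree_ES_if_no_cycle_path_edge assms(1) enters_no_path by simp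
  qed
qed

lemma inj_on_reroot:
  assumes "c < n"
  shows "inj_on (reroot c) {(T, F). is_subtree V EC T F}"
proof (rule inj_onI, clarify)
  fix T1 F1 T2 F2 assume st: "is_subtree V EC T1 F1" "is_subtree V EC T2 F2"
    and eq: "reroot c (T1, F1) = reroot c (T2, F2)"
  let ?r = "root_vertex c F1"
  have "?r = root_vertex c F2"
    using arg_cong[OF eq, of "root_vertex c \<circ> snd"] by (simp add: reroot_def root_vertex_reattach)
  then have "rotate_cycle n ?r ` T1 = rotate_cycle n ?r ` T2" "reattach n ?r ` F1 = reattach n ?r ` F2"
    using eq by (simp_all add: reroot_def)
  moreover have "?r < n" using st(1) root_vertex_lt assms unfolding is_subtree_def by blast
  moreover have "T1 \<subseteq> V" "F1 \<subseteq> EC" "T2 \<subseteq> V" "F2 \<subseteq> EC" using st unfolding is_subtree_def by auto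
  ultimately show "T1 = T2 \<and> F1 = F2"
    using inj_on_image_eq_iff inj_on_rotate_cycle inj_on_reattach by metis
qed

lemma card_subtrees_le_reroot:
  assumes "c < n"
    and "\<And>T F. is_subtree V EC T F \<Longrightarrow> P T \<Longrightarrow> (0, c) \<in> T \<or> c = 0"
    and "\<And>T F. is_subtree V EC T F \<Longrightarrow> P T \<Longrightarrow> Q (rotate_cycle n (root_vertex c F) ` T)"
  shows "card {(T, F). is_subtree V EC T F \<and> P T} \<le> card {(T, F). is_subtree V ES T F \<and> Q T}"
proof (rule card_inj_on_le)
  show "inj_on (reroot c) {(T, F). is_subtree V EC T F \<and> P T}"
    using inj_on_reroot[OF assms(1)] by (rule inj_on_subset) auto
  show "reroot c ` {(T, F). is_subtree V EC T F \<and> P T} \<subseteq> {(T, F). is_subtree V ES T F \<and> Q T}"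
    using subtree_reroot assms by (auto simp: reroot_def)
qed (rule finite_subtrees_ES)

lemma card_rerooted_tree:
  assumes "is_subtree V EC T F" "c < n"
  shows "card (rotate_cycle n (root_vertex c F) ` T) = card T"
proof -
  have "root_vertex c F < n" using root_vertex_lt assms unfolding is_subtree_def by blast
  then have "inj_on (rotate_cycle n (root_vertex c F)) V" by (rule inj_on_rotate_cycle)
  then have "inj_on (rotate_cycle n (root_vertex c F)) T"
    using assms(1) unfolding is_subtree_def by (meson inj_on_subset)
  then show ?thesis by (rule card_image)
qed

lemma zero_in_rerooted_tree:
  assumes "is_subtree V EC T F" "c < n" "(0, c) \<in> T"
  shows "(0, 0) \<in> rotate_cycle n (root_vertex c F) ` T"
proof -
  have "root_vertex c F < n" using root_vertex_lt assms unfolding is_subtree_def by blast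
  then have "rotate_cycle n (root_vertex c F) (0, root_vertex c F) = (0, 0)" by simp
  moreover have "(0, root_vertex c F) \<in> T" using root_vertex_in_tree assms(1,3) by blast
  ultimately show ?thesis by (metis image_eqI)
qed

end

theorem lemma3:
  fixes n :: nat and ls :: "nat list" and att :: "nat \<Rightarrow> nat"
  assumes "n \<ge> 3"
    and "\<forall>l\<in>set ls. l > 0"
    and "\<forall>j < length ls. att j < n"
  shows "(\<forall>k. nk (cp_verts n ls) (cp_edges n ls att) k
               \<le> nk (cp_verts n ls) (cp_edges n ls (\<lambda>_. 0)) k)
       \<and> (\<forall>k. \<forall>i < n. nkv (cp_verts n ls) (cp_edges n ls att) (0, i) k
               \<le> nkv (cp_verts n ls) (cp_edges n ls (\<lambda>_. 0)) (0, 0) k)"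
proof -
  interpret cycle_with_paths n ls att using assms by unfold_locales
  have "0 < n" using n_ge_3 by simp
  have "nk V EC k \<le> nk V ES k" for k
  proof -
    have "card {(T, F). is_subtree V EC T F \<and> card T = k}
        \<le> card {(T, F). is_subtree V ES T F \<and> card T = k}"
      by (rule card_subtrees_le_reroot[OF \<open>0 < n\<close>])
        (simp_all add: card_rerooted_tree[OF _ \<open>0 < n\<close>])
    then show ?thesis by (simp add: nk_def)
  qed
  moreover have "nkv V EC (0, i) k \<le> nkv V ES (0, 0) k" if "i < n" for i k
    unfolding nkv_def
    by (rule card_subtrees_le_reroot[OF that])
      (simp_all add: card_rerooted_tree[OF _ that] zero_in_rerooted_tree[OF _ that])
  ultimately show ?thesis by blast
qed

end
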